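(* Let $m\ge2$, $k\ge2$. (1) For every irreducible $(\mathbf T,\sigma)\in\mathcal C(m)$, \[ km-|\mathbf T|+\frac{a(\sigma)}2\ge m . \] (2) If $(\mathbf T,\sigma)\in\mathcal C(m)$ is irreducible but not circle-like and $km-|\mathbf T|+\frac{a(\sigma)}2=m$, then the cycle decomposition of $\sigma$ contains at least one cycle of length at least $3$.
   Context: $[p]=\{1,\dots,p\}$. $S(m,k)$ is the set of equivalence classes (under permutations of $[km]$ applied entrywise; a representative fixed in each class) of $\mathbf T=(T_1,\dots,T_m)$, $T_i=(T_{i,1},\dots,T_{i,k})\in[km]^k$ with pairwise distinct entries; $\mathrm{Range}(\mathbf T)=\{T_{i,j}\}$, $|\mathbf T|=|\mathrm{Range}(\mathbf T)|$. For $\sigma$ a permutation of $\mathrm{Range}(\mathbf T)$, $a(\sigma)=\#\{q:\sigma(q)\ne q\}$. The $(\mathbf T,\sigma)$-graph has vertices $(i,j)$, $i\in[m],j\in[k]$; black edges $(i,j)$–$(i,j+1)$; solid red edges between distinct $(i,j),(i',j')$ with $T_{i,j}=T_{i',j'}$; dotted red edges between $(i,j),(i',j')$ with $T_{i,j}\ne T_{i',j'}$ and $\sigma(T_{i,j})=T_{i',j'}$ or $\sigma(T_{i',j'})=T_{i,j}$. $\mathcal C(m)$: pairs with $\mathbf T\in S(m,k)$ and connected graph. $T_{i,j}$ is a connection point if $\sigma(T_{i,j})\notin T_i$ or $T_{i,j}\in T_{i'}$ for some $i'\ne i$. $(\mathbf T,\sigma)$ is reducible if its graph is connected and there are $i,j$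 with $T_{i,j}$ the only connection point in $T_i$ and $\sigma(x)=x$ for all entries $x\ne T_{i,j}$ of $T_i$; irreducible = connected and not reducible. An irreducible pair is circle-like if for each $i\in[m]$ there are exactly two distinct $i_1,i_2\in[k]$ such that each of $(i,i_1),(i,i_2)$ has exactly one red edge and that edge goes to some $(i',j')$ with $i'\ne i$, and all other vertices have no red edges. *)

theory Defs
  imports Complex_Main "HOL-Combinatorics.Permutations" "HOL-Combinatorics.Orbits"
begin

text \<open>A tuple T = (T_1,...,T_m), T_i = (T_{i,1},...,T_{i,k}) is encoded as a function
  T :: nat => nat => nat, with T i j = T_{i,j} for i in {1..m}, j in {1..k}.\<close>

definition is_tuple :: "nat \<Rightarrow> nat \<Rightarrow> (nat \<Rightarrow> nat \<Rightarrow> nat) \<Rightarrow> bool" where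
  "is_tuple m k T \<longleftrightarrow>
     (\<forall>i\<in>{1..m}. \<forall>j\<in>{1..k}. T i j \<in> {1..k*m}) \<and>
     (\<forall>i\<in>{1..m}. inj_on (T i) {1..k})"

definition RangeT :: "nat \<Rightarrow> nat \<Rightarrow> (nat \<Rightarrow> nat \<Rightarrow> nat) \<Rightarrow> nat set" where
  "RangeT m k T = {T i j | i j. i \<in> {1..m} \<and> j \<in> {1..k}}"

definition row :: "nat \<Rightarrow> (nat \<Rightarrow> nat \<Rightarrow> nat) \<Rightarrow> nat \<Rightarrow> nat set" where
  "row k T i = T i ` {1..k}"

definition a_perm :: "nat set \<Rightarrow> (nat \<Rightarrow> nat) \<Rightarrow> nat" where
  "a_perm R \<sigma> = card {q \<in> R. \<sigma> q \<noteq> q}"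

definition vertices :: "nat \<Rightarrow> nat \<Rightarrow> (nat \<times> nat) set" where
  "vertices m k = {1..m} \<times> {1..k}"

definition black_edge :: "nat \<Rightarrow> nat \<Rightarrow> nat \<times> nat \<Rightarrow> nat \<times> nat \<Rightarrow> bool" where
  "black_edge m k v w \<longleftrightarrow> v \<in> vertices m k \<and> w \<in> vertices m k \<and>
     fst v = fst w \<and> (snd w = snd v + 1 \<or> snd v = snd w + 1)"

definition solid_red :: "nat \<Rightarrow> nat \<Rightarrow> (nat \<Rightarrow> nat \<Rightarrow> nat) \<Rightarrow> nat \<times> nat \<Rightarrow> nat \<times> nat \<Rightarrow> bool" where
  "solid_red m k T v w \<longleftrightarrow> v \<in> vertices m k \<and> w \<in> vertices m k \<and> v \<noteq> w \<and>
     T (fst v) (snd v) = T (fst w) (snd w)"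

definition dotted_red :: "nat \<Rightarrow> nat \<Rightarrow> (nat \<Rightarrow> nat \<Rightarrow> nat) \<Rightarrow> (nat \<Rightarrow> nat) \<Rightarrow>
    nat \<times> nat \<Rightarrow> nat \<times> nat \<Rightarrow> bool" where
  "dotted_red m k T \<sigma> v w \<longleftrightarrow> v \<in> vertices m k \<and> w \<in> vertices m k \<and>
     T (fst v) (snd v) \<noteq> T (fst w) (snd w) \<and>
     (\<sigma> (T (fst v) (snd v)) = T (fst w) (snd w) \<or> \<sigma> (T (fst w) (snd w)) = T (fst v) (snd v))"

definition red_edge :: "nat \<Rightarrow> nat \<Rightarrow> (nat \<Rightarrow> nat \<Rightarrow> nat) \<Rightarrow> (nat \<Rightarrow> nat) \<Rightarrow>
    nat \<times> nat \<Rightarrow> nat \<times> nat \<Rightarrow> bool" where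
  "red_edge m k T \<sigma> v w \<longleftrightarrow> solid_red m k T v w \<or> dotted_red m k T \<sigma> v w"

definition graph_edge :: "nat \<Rightarrow> nat \<Rightarrow> (nat \<Rightarrow> nat \<Rightarrow> nat) \<Rightarrow> (nat \<Rightarrow> nat) \<Rightarrow>
    nat \<times> nat \<Rightarrow> nat \<times> nat \<Rightarrow> bool" where
  "graph_edge m k T \<sigma> v w \<longleftrightarrow> black_edge m k v w \<or> red_edge m k T \<sigma> v w"

definition graph_connected :: "nat \<Rightarrow> nat \<Rightarrow> (nat \<Rightarrow> nat \<Rightarrow> nat) \<Rightarrow> (nat \<Rightarrow> nat) \<Rightarrow> bool" where
  "graph_connected m k T \<sigma> \<longleftrightarrow>
     (\<forall>v\<in>vertices m k. \<forall>w\<in>vertices m k. (graph_edge m k T \<sigma>)\<^sup>*\<^sup>* v w)"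

definition in_C :: "nat \<Rightarrow> nat \<Rightarrow> (nat \<Rightarrow> nat \<Rightarrow> nat) \<Rightarrow> (nat \<Rightarrow> nat) \<Rightarrow> bool" where
  "in_C m k T \<sigma> \<longleftrightarrow> is_tuple m k T \<and> \<sigma> permutes RangeT m k T \<and> graph_connected m k T \<sigma>"

definition connection_point :: "nat \<Rightarrow> nat \<Rightarrow> (nat \<Rightarrow> nat \<Rightarrow> nat) \<Rightarrow> (nat \<Rightarrow> nat) \<Rightarrow>
    nat \<Rightarrow> nat \<Rightarrow> bool" where
  "connection_point m k T \<sigma> i j \<longleftrightarrow>
     \<sigma> (T i j) \<notin> row k T i \<or> (\<exists>i'\<in>{1..m}. i' \<noteq> i \<and> T i j \<in> row k T i')"

definition reducible :: "nat \<Rightarrow> nat \<Rightarrow> (nat \<Rightarrow> nat \<Rightarrow> nat) \<Rightarrow> (nat \<Rightarrow> nat) \<Rightarrow> bool" where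
  "reducible m k T \<sigma> \<longleftrightarrow> graph_connected m k T \<sigma> \<and>
     (\<exists>i\<in>{1..m}. \<exists>j\<in>{1..k}.
        connection_point m k T \<sigma> i j \<and>
        (\<forall>j'\<in>{1..k}. connection_point m k T \<sigma> i j' \<longrightarrow> T i j' = T i j) \<and>
        (\<forall>x\<in>row k T i. x \<noteq> T i j \<longrightarrow> \<sigma> x = x))"

definition irreducible_pair :: "nat \<Rightarrow> nat \<Rightarrow> (nat \<Rightarrow> nat \<Rightarrow> nat) \<Rightarrow> (nat \<Rightarrow> nat) \<Rightarrow> bool" where
  "irreducible_pair m k T \<sigma> \<longleftrightarrow> graph_connected m k T \<sigma> \<and> \<not> reducible m k T \<sigma>"

definition single_outer_red :: "nat \<Rightarrow> nat \<Rightarrow> (nat \<Rightarrow> nat \<Rightarrow> nat) \<Rightarrow> (nat \<Rightarrow> nat) \<Rightarrow>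
    nat \<Rightarrow> nat \<Rightarrow> bool" where
  "single_outer_red m k T \<sigma> i j \<longleftrightarrow>
     (\<exists>w. {u. red_edge m k T \<sigma> (i, j) u} = {w} \<and> fst w \<noteq> i)"

definition circle_like :: "nat \<Rightarrow> nat \<Rightarrow> (nat \<Rightarrow> nat \<Rightarrow> nat) \<Rightarrow> (nat \<Rightarrow> nat) \<Rightarrow> bool" where
  "circle_like m k T \<sigma> \<longleftrightarrow> irreducible_pair m k T \<sigma> \<and>
     (\<forall>i\<in>{1..m}. \<exists>i1 i2. i1 \<noteq> i2 \<and>
        {j \<in> {1..k}. single_outer_red m k T \<sigma> i j} = {i1, i2} \<and>
        (\<forall>j\<in>{1..k} - {i1, i2}. \<forall>u. \<not> red_edge m k T \<sigma> (i, j) u))"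

end

theory Submission
  imports Defs
begin

text \<open>Give every value x of Range(T) the weight
  w(x) = (c(x) - 1 + [\<sigma> x \<noteq> x]/2) / c(x), where c(x) is the number of rows containing x.
  Summing w over all rows counts each x exactly c(x) times, so the total is
  km - |T| + a(\<sigma>)/2. A value is active if it is shared by two rows or moved by \<sigma>;
  active values have weight at least 1/2, the others weight 0. Every row contains a connection
  point (the graph is connected and m \<ge> 2), connection points are active, and irreducibility
  forces a second active value in every row; hence each row has weight at least 1, which gives (1).
  In the equality case every row has exactly two active values, each of weight exactly 1/2,
  i.e. either shared by exactly two rows and fixed, or unshared and moved. If moreover \<sigma> has
  no cycle of length at least 3, then \<sigma> is an involution, and a direct inspection of the red
  edges shows that the pair is circle-like.\<close>

lemma card_orbit_ge_3:
  assumes "f permutes S" "finite S" "x \<in> S" "f (f x) \<noteq> x"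
  shows "card (orbit f x) \<ge> 3"
proof -
  have "permutation f" using assms(1,2) by (auto simp: permutation_permutes)
  then have "x \<in> orbit f x" by (rule permutation_self_in_orbit)
  then have sub: "{x, f x, f (f x)} \<subseteq> orbit f x" by (auto intro: orbit.intros)
  have "inj f" using assms(1) by (rule permutes_inj)
  have "f x \<noteq> x" using assms(4) by auto
  then have "f (f x) \<noteq> f x" using \<open>inj f\<close> by (metis injD)
  then have "card {x, f x, f (f x)} = 3" using assms(4) \<open>f x \<noteq> x\<close> by auto
  moreover have "finite (orbit f x)"
    using permutes_orbit_subset[OF assms(1,3)] assms(2) by (rule finite_subset)
  ultimately show ?thesis using card_mono[OF _ sub] by simp
qed

locale connected_pair =
  fixes m k :: nat and T :: "nat \<Rightarrow> nat \<Rightarrow> nat" and \<sigma> :: "nat \<Rightarrow> nat"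
  assumes two_rows: "m \<ge> 2" and row_nonempty: "k \<ge> 1" and tuple: "is_tuple m k T"
    and permutes_range: "\<sigma> permutes RangeT m k T"
    and connected: "graph_connected m k T \<sigma>"
begin

abbreviation "R \<equiv> RangeT m k T"

lemma in_range_iff: "x \<in> R \<longleftrightarrow> (\<exists>i\<in>{1..m}. x \<in> row k T i)"
  unfolding RangeT_def row_def by blast

lemma finite_range: "finite R"
proof (rule finite_subset)
  show "R \<subseteq> {1..k*m}" using tuple unfolding is_tuple_def RangeT_def by blast
qed simp

lemma row_subset_range: "i \<in> {1..m} \<Longrightarrow> row k T i \<subseteq> R"
  using in_range_iff by blast

lemma entry_in_row: "j \<in> {1..k} \<Longrightarrow> T i j \<in> row k T i"
  unfolding row_def by blast

lemma row_inj: "i \<in> {1..m} \<Longrightarrow> j \<in> {1..k} \<Longrightarrow> j' \<in> {1..k} \<Longrightarrow> T i j = T i j' \<Longrightarrow> j = j'"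
  using tuple unfolding is_tuple_def inj_on_def by blast

lemma card_row: "i \<in> {1..m} \<Longrightarrow> card (row k T i) = k"
  using tuple unfolding is_tuple_def row_def by (simp add: card_image)

lemma sigma_inj: "inj \<sigma>"
  using permutes_range by (rule permutes_inj)

lemma sigma_in_range: "x \<in> R \<Longrightarrow> \<sigma> x \<in> R"
  using permutes_range by (simp add: permutes_in_image)

subsection \<open>Weights\<close>

definition row_count :: "nat \<Rightarrow> nat" where
  "row_count x = card {i \<in> {1..m}. x \<in> row k T i}"

definition weight :: "nat \<Rightarrow> real" where
  "weight x = (real (row_count x) - 1 + (if \<sigma> x \<noteq> x then 1/2 else 0)) / real (row_count x)"

definition active :: "nat \<Rightarrow> bool" where
  "active x \<longleftrightarrow> row_count x \<ge> 2 \<or> \<sigma> x \<noteq> x"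

definition row_weight :: "nat \<Rightarrow> real" where
  "row_weight i = (\<Sum>x\<in>row k T i. weight x)"

lemma row_count_pos: "x \<in> R \<Longrightarrow> row_count x \<ge> 1"
  unfolding row_count_def in_range_iff by (auto simp: Suc_le_eq card_gt_0_iff)

lemma row_count_ge_2_iff:
  assumes "i \<in> {1..m}" "x \<in> row k T i"
  shows "row_count x \<ge> 2 \<longleftrightarrow> (\<exists>i'\<in>{1..m}. i' \<noteq> i \<and> x \<in> row k T i')"
proof -
  let ?S = "{i \<in> {1..m}. x \<in> row k T i}"
  have "finite ?S" by simp
  moreover have "i \<in> ?S" using assms by blast
  ultimately have "row_count x = Suc (card (?S - {i}))" unfolding row_count_def by (rule card.remove)
  then have "row_count x \<ge> 2 \<longleftrightarrow> card (?S - {i}) > 0" by (simp add: Suc_le_eq)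
  also have "\<dots> \<longleftrightarrow> ?S - {i} \<noteq> {}" by (simp add: card_gt_0_iff)
  also have "\<dots> \<longleftrightarrow> (\<exists>i'\<in>{1..m}. i' \<noteq> i \<and> x \<in> row k T i')" by blast
  finally show ?thesis .
qed

lemma sum_rows_eq_sum_range:
  "(\<Sum>i\<in>{1..m}. \<Sum>x\<in>row k T i. g x) = (\<Sum>x\<in>R. real (row_count x) * g x)"
proof -
  have rows: "{x \<in> R. x \<in> row k T i} = row k T i" if "i \<in> {1..m}" for i
    using row_subset_range[OF that] by blast
  have "(\<Sum>i\<in>{1..m}. \<Sum>x\<in>row k T i. g x) = (\<Sum>i\<in>{1..m}. \<Sum>x\<in>{x \<in> R. x \<in> row k T i}. g x)"
    by (intro sum.cong refl) (simp add: rows)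
  also have "\<dots> = (\<Sum>x\<in>R. \<Sum>i\<in>{i \<in> {1..m}. x \<in> row k T i}. g x)"
    using finite_range by (intro sum.swap_restrict) simp_all
  finally show ?thesis by (simp add: row_count_def)
qed

lemma sum_row_weight:
  "(\<Sum>i\<in>{1..m}. row_weight i) = real (k * m) - real (card R) + real (a_perm R \<sigma>) / 2"
proof -
  have "(\<Sum>i\<in>{1..m}. row_weight i)
      = (\<Sum>x\<in>R. real (row_count x) - 1 + (if \<sigma> x \<noteq> x then 1/2 else 0))"
    unfolding row_weight_def sum_rows_eq_sum_range
    using row_count_pos by (intro sum.cong refl) (fastforce simp: weight_def)
  also have "\<dots> = (\<Sum>x\<in>R. real (row_count x)) - real (card R) + real (a_perm R \<sigma>) / 2"
    using finite_range by (simp add: sum.distrib sum_subtractf sum.If_cases a_perm_def Int_def)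
  also have "(\<Sum>x\<in>R. real (row_count x)) = real (k * m)"
    using sum_rows_eq_sum_range[of "\<lambda>_. 1"] by (simp add: card_row mult.commute)
  finally show ?thesis .
qed

lemma weight_nonneg: "x \<in> R \<Longrightarrow> weight x \<ge> 0"
  using row_count_pos by (simp add: weight_def)

lemma weight_ge_half: "x \<in> R \<Longrightarrow> active x \<Longrightarrow> weight x \<ge> 1/2"
  using row_count_pos[of x] by (auto simp: weight_def active_def field_simps)

lemma weight_eq_half_cases:
  assumes "x \<in> R" "weight x = 1/2"
  shows "(row_count x = 2 \<and> \<sigma> x = x) \<or> (row_count x = 1 \<and> \<sigma> x \<noteq> x)"
proof -
  have "real (row_count x) \<ge> 1" using row_count_pos[OF assms(1)] by simp
  then show ?thesis using assms(2) by (auto simp: weight_def field_simps split: if_splits)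
qed

subsection \<open>Rows of irreducible pairs\<close>

text \<open>Without a connection point, a row is mapped onto itself by \<sigma> and shares no value with
  another row, so no edge of the graph leaves it.\<close>
lemma edge_stays_in_row:
  assumes i: "i \<in> {1..m}" and no_cp: "\<forall>j\<in>{1..k}. \<not> connection_point m k T \<sigma> i j"
    and edge: "graph_edge m k T \<sigma> (i, j) (a, b)"
  shows "a = i"
proof (rule ccontr)
  assume "a \<noteq> i"
  have maps_into: "\<sigma> x \<in> row k T i" if "x \<in> row k T i" for x
    using that no_cp unfolding connection_point_def by (auto simp: row_def)
  have unshared: "x \<notin> row k T i'"
    if x: "x \<in> row k T i" and i': "i' \<in> {1..m}" "i' \<noteq> i" for x i'
  proof
    assume "x \<in> row k T i'"
    obtain j where "j \<in> {1..k}" "x = T i j" using x unfolding row_def by blast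
    then show False
      using no_cp i' \<open>x \<in> row k T i'\<close> unfolding connection_point_def by blast
  qed
  have "\<sigma> ` row k T i = row k T i"
    using maps_into by (intro endo_inj_surj inj_on_subset[OF sigma_inj]) (auto simp: row_def)
  then have maps_from: "y \<in> row k T i" if "\<sigma> y \<in> row k T i" for y
    using that by (metis inj_image_mem_iff sigma_inj)
  have verts: "(i, j) \<in> vertices m k" "(a, b) \<in> vertices m k"
    using edge unfolding graph_edge_def black_edge_def red_edge_def solid_red_def dotted_red_def
    by auto
  then have in_rows: "T i j \<in> row k T i" "T a b \<in> row k T a" "a \<in> {1..m}"
    by (auto simp: vertices_def entry_in_row)
  have "T a b \<in> row k T i"
    using edge \<open>a \<noteq> i\<close> in_rows maps_into[OF in_rows(1)] maps_from
    unfolding graph_edge_def black_edge_def red_edge_def solid_red_def dotted_red_def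
    by auto
  then show False using unshared in_rows \<open>a \<noteq> i\<close> by blast
qed

lemma connection_point_exists:
  assumes i: "i \<in> {1..m}"
  shows "\<exists>j\<in>{1..k}. connection_point m k T \<sigma> i j"
proof (rule ccontr)
  assume "\<not> ?thesis"
  then have no_cp: "\<forall>j\<in>{1..k}. \<not> connection_point m k T \<sigma> i j" by blast
  have stays: "fst w = i" if "(graph_edge m k T \<sigma>)\<^sup>*\<^sup>* v w" "fst v = i" for v w
    using that
  proof (induction rule: rtranclp_induct)
    case (step y z)
    then show ?case using edge_stays_in_row[OF i no_cp, of "snd y" "fst z" "snd z"]
      by (metis prod.collapse)
  qed
  define i' where "i' = (if i = 1 then 2 else 1 :: nat)"
  have "i' \<in> {1..m}" "i' \<noteq> i" using two_rows i unfolding i'_def by auto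
  moreover have "(graph_edge m k T \<sigma>)\<^sup>*\<^sup>* (i, 1) (i', 1)"
    using connected i \<open>i' \<in> {1..m}\<close> row_nonempty
    unfolding graph_connected_def vertices_def by auto
  ultimately show False using stays by fastforce
qed

lemma connection_point_active:
  assumes i: "i \<in> {1..m}" and j: "j \<in> {1..k}" and cp: "connection_point m k T \<sigma> i j"
  shows "active (T i j)"
proof (cases "\<sigma> (T i j) \<in> row k T i")
  case True
  then have "\<exists>i'\<in>{1..m}. i' \<noteq> i \<and> T i j \<in> row k T i'"
    using cp unfolding connection_point_def by blast
  then show ?thesis using row_count_ge_2_iff[OF i entry_in_row[OF j]] unfolding active_def by blast
next
  case False
  then have "\<sigma> (T i j) \<noteq> T i j" using entry_in_row[OF j] by auto
  then show ?thesis unfolding active_def by blast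
qed

definition active_entries :: "nat \<Rightarrow> nat set" where
  "active_entries i = {x \<in> row k T i. active x}"

lemma finite_active_entries: "finite (active_entries i)"
  unfolding active_entries_def row_def by simp

lemma card_active_entries_ge_2:
  assumes i: "i \<in> {1..m}" and irr: "\<not> reducible m k T \<sigma>"
  shows "card (active_entries i) \<ge> 2"
proof -
  obtain j where j: "j \<in> {1..k}" "connection_point m k T \<sigma> i j"
    using connection_point_exists[OF i] by blast
  have "\<exists>y \<in> row k T i. y \<noteq> T i j \<and> active y"
  proof -
    have "\<not> (\<forall>j'\<in>{1..k}. connection_point m k T \<sigma> i j' \<longrightarrow> T i j' = T i j)
          \<or> \<not> (\<forall>y\<in>row k T i. y \<noteq> T i j \<longrightarrow> \<sigma> y = y)"
      using irr connected i j unfolding reducible_def by blast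
    then show ?thesis
    proof (elim disjE)
      assume "\<not> (\<forall>j'\<in>{1..k}. connection_point m k T \<sigma> i j' \<longrightarrow> T i j' = T i j)"
      then obtain j' where "j' \<in> {1..k}" "connection_point m k T \<sigma> i j'" "T i j' \<noteq> T i j"
        by blast
      then show ?thesis using connection_point_active[OF i] entry_in_row by blast
    qed (auto simp: active_def)
  qed
  then obtain y where y: "{T i j, y} \<subseteq> active_entries i" "y \<noteq> T i j"
    using connection_point_active[OF i j] entry_in_row[OF j(1)]
    unfolding active_entries_def by blast
  have "card {T i j, y} \<le> card (active_entries i)" by (rule card_mono[OF finite_active_entries y(1)])
  moreover have "card {T i j, y} = 2" using y(2) by simp
  ultimately show ?thesis by simp
qed

lemma active_entries_subset_range: "i \<in> {1..m} \<Longrightarrow> active_entries i \<subseteq> R"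
  using row_subset_range unfolding active_entries_def by blast

lemma sum_active_weight_le_row_weight:
  "i \<in> {1..m} \<Longrightarrow> (\<Sum>x\<in>active_entries i. weight x) \<le> row_weight i"
  unfolding row_weight_def active_entries_def
  using row_subset_range weight_nonneg by (intro sum_mono2) (auto simp: row_def)

lemma half_card_active_entries_le_row_weight:
  assumes "i \<in> {1..m}"
  shows "real (card (active_entries i)) / 2 \<le> row_weight i"
proof -
  have "real (card (active_entries i)) / 2 = (\<Sum>x\<in>active_entries i. 1/2)" by simp
  also have "\<dots> \<le> (\<Sum>x\<in>active_entries i. weight x)"
    using active_entries_subset_range[OF assms] weight_ge_half
    by (intro sum_mono) (auto simp: active_entries_def)
  also have "\<dots> \<le> row_weight i" using assms by (rule sum_active_weight_le_row_weight)
  finally show ?thesis .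
qed

lemma row_weight_ge_1: "i \<in> {1..m} \<Longrightarrow> \<not> reducible m k T \<sigma> \<Longrightarrow> row_weight i \<ge> 1"
  using card_active_entries_ge_2 half_card_active_entries_le_row_weight by fastforce

lemma excess_ge_m:
  assumes "\<not> reducible m k T \<sigma>"
  shows "real (k * m) - real (card R) + real (a_perm R \<sigma>) / 2 \<ge> real m"
proof -
  have "real m = (\<Sum>i\<in>{1..m}. 1)" by simp
  also have "\<dots> \<le> (\<Sum>i\<in>{1..m}. row_weight i)"
    using row_weight_ge_1[OF _ assms] by (rule sum_mono)
  also have "\<dots> = real (k * m) - real (card R) + real (a_perm R \<sigma>) / 2"
    by (rule sum_row_weight)
  finally show ?thesis .
qed

subsection \<open>The equality case\<close>

lemma row_weight_eq_1:
  assumes irr: "\<not> reducible m k T \<sigma>"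
    and eq: "real (k * m) - real (card R) + real (a_perm R \<sigma>) / 2 = real m"
    and i: "i \<in> {1..m}"
  shows "row_weight i = 1"
proof -
  have "(\<Sum>i\<in>{1..m}. row_weight i - 1) = (\<Sum>i\<in>{1..m}. row_weight i) - real m"
    by (simp add: sum_subtractf)
  also have "\<dots> = 0" unfolding sum_row_weight eq by simp
  finally have "(\<Sum>i\<in>{1..m}. row_weight i - 1) = 0" .
  then show ?thesis
    using sum_nonneg_eq_0_iff[of "{1..m}" "\<lambda>i. row_weight i - 1"] row_weight_ge_1[OF _ irr] i
    by simp
qed

lemma tight_row_active_entries:
  assumes i: "i \<in> {1..m}" and irr: "\<not> reducible m k T \<sigma>" and tight: "row_weight i = 1"
  shows "card (active_entries i) = 2" and "x \<in> active_entries i \<Longrightarrow> weight x = 1/2"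
proof -
  show card: "card (active_entries i) = 2"
    using card_active_entries_ge_2[OF i irr] half_card_active_entries_le_row_weight[OF i] tight
    by linarith
  then obtain x1 x2 where A: "active_entries i = {x1, x2}" "x1 \<noteq> x2"
    by (auto simp: card_2_iff)
  have ge: "weight x1 \<ge> 1/2" "weight x2 \<ge> 1/2"
    using A active_entries_subset_range[OF i] weight_ge_half unfolding active_entries_def by blast+
  have "weight x1 + weight x2 \<le> row_weight i"
    using sum_active_weight_le_row_weight[OF i] A by simp
  then show "x \<in> active_entries i \<Longrightarrow> weight x = 1/2"
    using A ge tight by auto
qed

definition occurrences :: "nat \<Rightarrow> (nat \<times> nat) set" where
  "occurrences y = {v \<in> vertices m k. T (fst v) (snd v) = y}"

lemma mem_occurrences: "(a, b) \<in> occurrences y \<longleftrightarrow> a \<in> {1..m} \<and> b \<in> {1..k} \<and> T a b = y"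
  by (simp add: occurrences_def vertices_def)

lemma occurrence_in_row: "v \<in> occurrences y \<Longrightarrow> fst v \<in> {1..m} \<and> y \<in> row k T (fst v)"
  using entry_in_row by (cases v) (auto simp: mem_occurrences)

lemma card_occurrences: "card (occurrences y) = row_count y"
proof -
  have inj: "inj_on fst (occurrences y)"
  proof (rule inj_onI)
    fix v w assume "v \<in> occurrences y" "w \<in> occurrences y" "fst v = fst w"
    moreover obtain a b a' b' where "v = (a, b)" "w = (a', b')" by fastforce
    ultimately show "v = w" using row_inj[of a b b'] by (auto simp: mem_occurrences)
  qed
  have image: "fst ` occurrences y = {i \<in> {1..m}. y \<in> row k T i}"
  proof (intro set_eqI iffI)
    fix i assume "i \<in> fst ` occurrences y"
    then show "i \<in> {i \<in> {1..m}. y \<in> row k T i}" using occurrence_in_row by blast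
  next
    fix i assume "i \<in> {i \<in> {1..m}. y \<in> row k T i}"
    then obtain j where "i \<in> {1..m}" "j \<in> {1..k}" "T i j = y" unfolding row_def by blast
    then have "(i, j) \<in> occurrences y" by (simp add: mem_occurrences)
    then show "i \<in> fst ` occurrences y" by (rule image_eqI[rotated]) simp
  qed
  have "card (occurrences y) = card (fst ` occurrences y)" using inj by (simp add: card_image)
  then show ?thesis unfolding image row_count_def .
qed

lemma red_neighbours:
  assumes inv: "\<And>x. \<sigma> (\<sigma> x) = x" and v: "(i, j) \<in> vertices m k"
  shows "{u. red_edge m k T \<sigma> (i, j) u}
           = (occurrences (T i j) - {(i, j)})
             \<union> (if \<sigma> (T i j) = T i j then {} else occurrences (\<sigma> (T i j)))"
proof -
  have swap: "\<sigma> y = T i j \<longleftrightarrow> y = \<sigma> (T i j)" for y using inv by metis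
  have edge: "red_edge m k T \<sigma> (i, j) (a, b) \<longleftrightarrow> (a, b) \<in> occurrences (T i j) - {(i, j)}
          \<or> \<sigma> (T i j) \<noteq> T i j \<and> (a, b) \<in> occurrences (\<sigma> (T i j))" for a b
    using v unfolding red_edge_def solid_red_def dotted_red_def fst_conv snd_conv swap
    by (auto simp: mem_occurrences vertices_def)
  show ?thesis
  proof (rule set_eqI)
    fix u :: "nat \<times> nat"
    obtain a b where "u = (a, b)" by fastforce
    then show "u \<in> {u. red_edge m k T \<sigma> (i, j) u} \<longleftrightarrow> u \<in> (occurrences (T i j) - {(i, j)})
             \<union> (if \<sigma> (T i j) = T i j then {} else occurrences (\<sigma> (T i j)))"
      using edge by simp
  qed
qed

context
  assumes irr: "\<not> reducible m k T \<sigma>"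
    and eq: "real (k * m) - real (card R) + real (a_perm R \<sigma>) / 2 = real m"
    and inv: "\<And>x. \<sigma> (\<sigma> x) = x"
begin

lemma active_cases:
  assumes "x \<in> R" "active x"
  shows "(row_count x = 2 \<and> \<sigma> x = x) \<or> (row_count x = 1 \<and> \<sigma> x \<noteq> x)"
proof -
  obtain i where i: "i \<in> {1..m}" "x \<in> row k T i" using assms(1) in_range_iff by blast
  then have "x \<in> active_entries i" using assms(2) by (simp add: active_entries_def)
  then have "weight x = 1/2"
    by (rule tight_row_active_entries(2)[OF i(1) irr row_weight_eq_1[OF irr eq i(1)]])
  then show ?thesis using weight_eq_half_cases[OF assms(1)] by blast
qed

text \<open>If the moved value x and \<sigma> x lay in the same row, they would be its two active values,
  one of them a connection point; but both are unshared and \<sigma> swaps them.\<close>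
lemma moved_value_leaves_row:
  assumes i: "i \<in> {1..m}" and x: "x \<in> row k T i" and moved: "\<sigma> x \<noteq> x"
  shows "\<sigma> x \<notin> row k T i"
proof
  assume sx: "\<sigma> x \<in> row k T i"
  have "\<sigma> (\<sigma> x) \<noteq> \<sigma> x" using moved by (simp add: inv)
  then have "active x" "active (\<sigma> x)" using moved unfolding active_def by blast+
  then have sub: "{x, \<sigma> x} \<subseteq> active_entries i" using x sx by (simp add: active_entries_def)
  have "card {x, \<sigma> x} = card (active_entries i)"
    using moved tight_row_active_entries(1)[OF i irr row_weight_eq_1[OF irr eq i]] by simp
  then have act: "active_entries i = {x, \<sigma> x}"
    using card_subset_eq[OF finite_active_entries sub] by simp
  obtain j where j: "j \<in> {1..k}" "connection_point m k T \<sigma> i j"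
    using connection_point_exists[OF i] by blast
  have "active (T i j)" by (rule connection_point_active[OF i j])
  then have "T i j \<in> active_entries i" using entry_in_row[OF j(1)] by (simp add: active_entries_def)
  then have "T i j = x \<or> T i j = \<sigma> x" using act by simp
  then have stays: "\<sigma> (T i j) \<in> row k T i" and "\<sigma> (T i j) \<noteq> T i j"
    using x sx moved by (auto simp: inv)
  moreover have "T i j \<in> R" using row_subset_range[OF i] entry_in_row[OF j(1)] by blast
  ultimately have "row_count (T i j) = 1" using active_cases \<open>active (T i j)\<close> by auto
  then have "\<not> (\<exists>i'\<in>{1..m}. i' \<noteq> i \<and> T i j \<in> row k T i')"
    using row_count_ge_2_iff[OF i entry_in_row[OF j(1)]] by simp
  then show False using j(2) stays unfolding connection_point_def by blast
qed

lemma single_occurrence: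
  assumes "row_count y = 1"
  obtains w where "occurrences y = {w}"
  using assms card_occurrences card_1_singletonE by metis

lemma single_outer_red_if_active:
  assumes i: "i \<in> {1..m}" and j: "j \<in> {1..k}" and act: "active (T i j)"
  shows "single_outer_red m k T \<sigma> i j"
proof -
  define x where "x = T i j"
  have v: "(i, j) \<in> occurrences x" "(i, j) \<in> vertices m k"
    using i j by (simp_all add: x_def mem_occurrences vertices_def)
  have xR: "x \<in> R" using i j row_subset_range entry_in_row unfolding x_def by blast
  have nbrs: "{u. red_edge m k T \<sigma> (i, j) u}
               = (occurrences x - {(i, j)}) \<union> (if \<sigma> x = x then {} else occurrences (\<sigma> x))"
    using red_neighbours[OF inv v(2)] unfolding x_def by simp
  consider "row_count x = 2" "\<sigma> x = x" | "row_count x = 1" "\<sigma> x \<noteq> x"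
    using active_cases[OF xR] act unfolding x_def by blast
  then show ?thesis
  proof cases
    case 1
    have "card (occurrences x - {(i, j)}) = 1"
      using card_occurrences[of x] v(1) 1 by (simp add: card_Diff_singleton_if)
    then obtain w where w: "occurrences x - {(i, j)} = {w}" by (rule card_1_singletonE)
    then have "w \<in> occurrences x" "w \<noteq> (i, j)" by auto
    have "fst w \<noteq> i"
    proof
      assume "fst w = i"
      then have "w = (i, snd w)" "snd w \<in> {1..k}" "T i (snd w) = T i j"
        using \<open>w \<in> occurrences x\<close> mem_occurrences[of i "snd w" x] unfolding x_def by auto
      then show False using row_inj[OF i j] \<open>w \<noteq> (i, j)\<close> by metis
    qed
    moreover have "{u. red_edge m k T \<sigma> (i, j) u} = {w}" using nbrs w 1(2) by simp
    ultimately show ?thesis unfolding single_outer_red_def by blast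
  next
    case 2
    obtain w where w: "occurrences x = {w}" using 2(1) by (rule single_occurrence)
    then have "occurrences x = {(i, j)}" using v(1) by simp
    have moved: "\<sigma> (\<sigma> x) \<noteq> \<sigma> x" using 2(2) by (simp add: inv)
    then have "active (\<sigma> x)" unfolding active_def by blast
    then have "row_count (\<sigma> x) = 1" using active_cases[OF sigma_in_range[OF xR]] moved by blast
    then obtain w' where w': "occurrences (\<sigma> x) = {w'}" by (rule single_occurrence)
    have "\<sigma> x \<notin> row k T i"
      using moved_value_leaves_row[OF i entry_in_row[OF j]] 2(2) unfolding x_def by blast
    moreover have "\<sigma> x \<in> row k T (fst w')" using occurrence_in_row[of w' "\<sigma> x"] w' by blast
    ultimately have "fst w' \<noteq> i" by auto
    moreover have "{u. red_edge m k T \<sigma> (i, j) u} = {w'}"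
      using nbrs w' 2(2) \<open>occurrences x = {(i, j)}\<close> by simp
    ultimately show ?thesis unfolding single_outer_red_def by blast
  qed
qed

lemma no_red_edge_if_inactive:
  assumes i: "i \<in> {1..m}" and j: "j \<in> {1..k}" and inact: "\<not> active (T i j)"
  shows "\<not> red_edge m k T \<sigma> (i, j) u"
proof -
  have "T i j \<in> R" using i j row_subset_range entry_in_row by blast
  then have "row_count (T i j) = 1" using row_count_pos inact unfolding active_def by fastforce
  then obtain w where w: "occurrences (T i j) = {w}" by (rule single_occurrence)
  have v: "(i, j) \<in> vertices m k" using i j by (simp add: vertices_def)
  have "(i, j) \<in> occurrences (T i j)" using i j by (simp add: mem_occurrences)
  then have "occurrences (T i j) = {(i, j)}" using w by simp
  moreover have "\<sigma> (T i j) = T i j" using inact unfolding active_def by blast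
  ultimately have "{u. red_edge m k T \<sigma> (i, j) u} = {}" using red_neighbours[OF inv v] by simp
  then show ?thesis by blast
qed

lemma circle_like_if_involution: "circle_like m k T \<sigma>"
  unfolding circle_like_def irreducible_pair_def
proof (intro conjI ballI connected irr)
  fix i assume i: "i \<in> {1..m}"
  let ?J = "{j \<in> {1..k}. active (T i j)}"
  have "T i ` ?J = active_entries i" unfolding active_entries_def row_def by blast
  moreover have "inj_on (T i) ?J" using row_inj[OF i] by (auto intro: inj_onI)
  ultimately have "card ?J = 2"
    using tight_row_active_entries(1)[OF i irr row_weight_eq_1[OF irr eq i]] by (metis card_image)
  then obtain j1 j2 where J: "?J = {j1, j2}" "j1 \<noteq> j2" by (auto simp: card_2_iff)
  have "{j \<in> {1..k}. single_outer_red m k T \<sigma> i j} = ?J"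
    using single_outer_red_if_active[OF i] no_red_edge_if_inactive[OF i]
    unfolding single_outer_red_def by blast
  moreover have "\<forall>j\<in>{1..k} - {j1, j2}. \<forall>u. \<not> red_edge m k T \<sigma> (i, j) u"
    using J no_red_edge_if_inactive[OF i] by blast
  ultimately show "\<exists>i1 i2. i1 \<noteq> i2 \<and> {j \<in> {1..k}. single_outer_red m k T \<sigma> i j} = {i1, i2}
      \<and> (\<forall>j\<in>{1..k} - {i1, i2}. \<forall>u. \<not> red_edge m k T \<sigma> (i, j) u)"
    using J by blast
qed

end

end

theorem mainTheorem14:
  fixes m k :: nat
  assumes "m \<ge> 2" and "k \<ge> 2"
  shows "(\<forall>T \<sigma>. in_C m k T \<sigma> \<and> irreducible_pair m k T \<sigma> \<longrightarrow>
            real (k * m) - real (card (RangeT m k T)) + real (a_perm (RangeT m k T) \<sigma>) / 2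
              \<ge> real m) \<and>
         (\<forall>T \<sigma>. in_C m k T \<sigma> \<and> irreducible_pair m k T \<sigma> \<and> \<not> circle_like m k T \<sigma> \<and>
            real (k * m) - real (card (RangeT m k T)) + real (a_perm (RangeT m k T) \<sigma>) / 2
              = real m \<longrightarrow>
            (\<exists>x\<in>RangeT m k T. card (orbit \<sigma> x) \<ge> 3))"
proof (intro conjI allI impI)
  fix T \<sigma>
  assume h: "in_C m k T \<sigma> \<and> irreducible_pair m k T \<sigma>"
  interpret connected_pair m k T \<sigma>
    using assms h unfolding in_C_def by unfold_locales auto
  show "real (k * m) - real (card R) + real (a_perm R \<sigma>) / 2 \<ge> real m"
    using excess_ge_m h unfolding irreducible_pair_def by blast
next
  fix T \<sigma>
  assume h: "in_C m k T \<sigma> \<and> irreducible_pair m k T \<sigma> \<and> \<not> circle_like m k T \<sigma> \<and>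
    real (k * m) - real (card (RangeT m k T)) + real (a_perm (RangeT m k T) \<sigma>) / 2 = real m"
  interpret connected_pair m k T \<sigma>
    using assms h unfolding in_C_def by unfold_locales auto
  show "\<exists>x\<in>R. card (orbit \<sigma> x) \<ge> 3"
  proof (rule ccontr)
    assume "\<not> ?thesis"
    then have "\<sigma> (\<sigma> x) = x" for x
      using card_orbit_ge_3[OF permutes_range finite_range] permutes_not_in[OF permutes_range]
      by (cases "x \<in> R") auto
    then show False
      using circle_like_if_involution h unfolding irreducible_pair_def by blast
  qed
qed

end
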